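(* Let $\mathbb{K}$ be an algebraically closed field of characteristic zero and let $D=\partial_x+(ay+b)\partial_y$ be a derivation of $\mathbb{K}[x,y]$ with $a,b\in\mathbb{K}[x]$ and $a\neq 0$. Then $D$ is simple if and only if $\mathrm{Aut}(D)=\{\mathrm{id}\}$.
   Context: A derivation of $\mathbb{K}[x,y]$ is a $\mathbb{K}$-linear map $D$ with $D(fg)=gD(f)+fD(g)$. $D$ is simple if there is no ideal $I$ with $(0)\neq I\neq \mathbb{K}[x,y]$ and $D(I)\subseteq I$. $\mathrm{Aut}(D)$ denotes the group of $\mathbb{K}$-algebra automorphisms $\rho$ of $\mathbb{K}[x,y]$ with $\rho D=D\rho$. *)

theory Defs
  imports "HOL-Computational_Algebra.Polynomial"
begin

text \<open>We model K[x,y] as (K[x])[y], i.e. the type 'a poly poly: a polynomial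
  in y whose coefficients are polynomials in x.\<close>

definition const2 :: "'a::comm_ring_1 \<Rightarrow> 'a poly poly" where
  "const2 c = [:[:c:]:]"

definition alg_closed_field :: "'a::field itself \<Rightarrow> bool" where
  "alg_closed_field _ \<longleftrightarrow> (\<forall>p::'a poly. degree p > 0 \<longrightarrow> (\<exists>z. poly p z = 0))"

definition dx :: "'a::field_char_0 poly poly \<Rightarrow> 'a poly poly" where
  "dx f = map_poly pderiv f"

definition dy :: "'a::field_char_0 poly poly \<Rightarrow> 'a poly poly" where
  "dy f = pderiv f"

definition Dab :: "'a::field_char_0 poly \<Rightarrow> 'a poly \<Rightarrow> 'a poly poly \<Rightarrow> 'a poly poly" where
  "Dab a b f = dx f + [:b, a:] * dy f"

definition is_ideal :: "'a::comm_ring_1 set \<Rightarrow> bool" where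
  "is_ideal I \<longleftrightarrow> 0 \<in> I \<and> (\<forall>f\<in>I. \<forall>g\<in>I. f + g \<in> I) \<and> (\<forall>f\<in>I. \<forall>r. r * f \<in> I)"

definition simple_derivation :: "('a::field poly poly \<Rightarrow> 'a poly poly) \<Rightarrow> bool" where
  "simple_derivation D \<longleftrightarrow>
     \<not> (\<exists>I. is_ideal I \<and> I \<noteq> {0} \<and> I \<noteq> UNIV \<and> D ` I \<subseteq> I)"

definition K_alg_aut :: "('a::field poly poly \<Rightarrow> 'a poly poly) \<Rightarrow> bool" where
  "K_alg_aut \<rho> \<longleftrightarrow> bij \<rho> \<and> (\<forall>f g. \<rho> (f + g) = \<rho> f + \<rho> g) \<and>
     (\<forall>f g. \<rho> (f * g) = \<rho> f * \<rho> g) \<and> (\<forall>c. \<rho> (const2 c) = const2 c)"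

definition Aut :: "('a::field poly poly \<Rightarrow> 'a poly poly) \<Rightarrow> ('a poly poly \<Rightarrow> 'a poly poly) set" where
  "Aut D = {\<rho>. K_alg_aut \<rho> \<and> \<rho> \<circ> D = D \<circ> \<rho>}"

end

theory Submission
  imports Defs
begin

text \<open>
  Both sides are equivalent to the non-existence of a polynomial solution \<open>h \<in> K[x]\<close> of
  \<open>h' = a h + b\<close>. Such an \<open>h\<close> makes \<open>y - h\<close> a Darboux polynomial (\<open>D(y - h) = a (y - h)\<close>),
  so \<open>D\<close> is not simple, and \<open>y \<mapsto> 2y - h\<close> is a nontrivial automorphism commuting with \<open>D\<close>.
  Conversely, in a proper \<open>D\<close>-invariant ideal the leading coefficients of the elements of
  minimal \<open>y\<close>-degree \<open>n\<close> form an ideal of \<open>K[x]\<close> closed under \<open>d/dx\<close>, hence containing \<open>1\<close>;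
  the resulting monic element \<open>f\<close> satisfies \<open>D f = n a f\<close>, and its coefficient of \<open>y\<^sup>n\<^sup>-\<^sup>1\<close>
  yields a solution. Finally, if \<open>D\<close> is simple its kernel consists of constants, so an
  automorphism \<open>\<rho>\<close> commuting with \<open>D\<close> maps \<open>x\<close> to \<open>x + c\<close>; comparing \<open>y\<close>-degrees in
  \<open>D(\<rho> y) = \<rho>(a y + b)\<close> shows \<open>\<rho> y = k y + e\<close> and \<open>a(x + c) = a(x)\<close>. Now \<open>c \<noteq> 0\<close> would make
  \<open>a\<close> constant and \<open>k \<noteq> 1\<close> would make \<open>e / (1 - k)\<close> a solution of \<open>h' = a h + b\<close>; and
  then \<open>e' = a e\<close> forces \<open>e = 0\<close>.
\<close>

section \<open>Calculus of the derivation\<close>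

lemma coeff_dx: "coeff (dx f) n = pderiv (coeff f n)"
  unfolding dx_def by (simp add: coeff_map_poly)

lemma dx_0 [simp]: "dx 0 = 0"
  by (simp add: dx_def)

lemma dx_pCons: "dx (pCons c f) = pCons (pderiv c) (dx f)"
  unfolding dx_def by (simp add: map_poly_pCons)

lemma dx_const: "dx [:g:] = [:pderiv g:]"
  using dx_pCons[of g 0] by (simp add: dx_def)

lemma dx_add: "dx (f + g) = dx f + dx g"
  by (rule poly_eqI) (simp add: coeff_dx pderiv_add)

lemma dx_smult: "dx (smult c f) = smult (pderiv c) f + smult c (dx f)"
  by (rule poly_eqI) (simp add: coeff_dx pderiv_mult algebra_simps)

lemma dx_mult: "dx (f * g) = dx f * g + f * dx g"
  by (induction f) (simp_all add: dx_add dx_smult dx_pCons algebra_simps)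

lemma Dab_add: "Dab a b (f + g) = Dab a b f + Dab a b g"
  by (simp add: Dab_def dx_add dy_def pderiv_add algebra_simps smult_add_right)

lemma Dab_diff: "Dab a b (f - g) = Dab a b f - Dab a b g"
  using Dab_add[of a b "f - g" g] by (simp add: algebra_simps)

lemma Dab_mult: "Dab a b (f * g) = Dab a b f * g + f * Dab a b g"
  by (simp add: Dab_def dx_mult dy_def pderiv_mult algebra_simps)

lemma Dab_const: "Dab a b [:g:] = [:pderiv g:]"
  by (simp add: Dab_def dx_const dy_def)

lemma coeff_Dab:
  "coeff (Dab a b f) n = pderiv (coeff f n) + smult (of_nat (Suc n)) (b * coeff f (Suc n))
     + smult (of_nat n) (a * coeff f n)"
  by (cases n) (simp_all add: Dab_def coeff_dx dy_def coeff_pderiv of_nat_poly algebra_simps)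

lemma degree_Dab_le: "degree (Dab a b f) \<le> degree f"
proof -
  have "degree (dx f) \<le> degree f"
    by (rule degree_le) (simp add: coeff_dx coeff_eq_0)
  moreover have "degree ([:b, a:] * pderiv f) \<le> degree f"
  proof (cases "degree f")
    case 0
    then show ?thesis by (simp add: pderiv_eq_0_iff[symmetric])
  next
    case (Suc k)
    have "degree ([:b, a:] * pderiv f) \<le> degree [:b, a:] + degree (pderiv f)"
      by (rule degree_mult_le)
    also have "\<dots> \<le> 1 + k" using Suc by (simp add: degree_pderiv)
    finally show ?thesis using Suc by simp
  qed
  ultimately show ?thesis unfolding Dab_def dy_def by (metis degree_add_le)
qed

lemma Dab_pcompose:
  "Dab a b (pcompose f q) = pcompose (dx f) q + pcompose (pderiv f) q * Dab a b q"
proof (induction f)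
  case 0
  then show ?case by (simp add: Dab_def dy_def)
next
  case (pCons c f)
  then show ?case
    by (simp add: pcompose_pCons Dab_add Dab_mult Dab_const dx_pCons pderiv_pCons pcompose_add
        algebra_simps)
qed

section \<open>Invariant ideals\<close>

lemma is_ideal_multiples: "is_ideal (range (\<lambda>g. g * P))"
  unfolding is_ideal_def
  by (auto intro: range_eqI[of _ _ 0]) (metis distrib_right rangeI, metis mult.assoc rangeI)

lemma is_ideal_diff: "is_ideal I \<Longrightarrow> f \<in> I \<Longrightarrow> g \<in> I \<Longrightarrow> f - g \<in> I"
  unfolding is_ideal_def by (metis diff_conv_add_uminus mult_minus1)

lemma is_ideal_smult: "is_ideal I \<Longrightarrow> f \<in> I \<Longrightarrow> smult r f \<in> I"
  unfolding is_ideal_def by (metis mult_smult_left mult_1)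

lemma is_ideal_UNIV_iff: "is_ideal I \<Longrightarrow> I = UNIV \<longleftrightarrow> 1 \<in> I"
  unfolding is_ideal_def by (metis UNIV_I mult.right_neutral subsetI subset_antisym)

lemma not_simple_derivation_if_Darboux:
  assumes "Dab a b P = u * P" "P \<noteq> 0" "\<not> is_unit P"
  shows "\<not> simple_derivation (Dab a b)"
proof -
  let ?I = "range (\<lambda>g. g * P)"
  have "P \<in> ?I" by (metis mult_1 rangeI)
  moreover have "1 \<notin> ?I" using assms(3) by (auto simp: dvd_def mult.commute)
  moreover have "Dab a b (g * P) = (Dab a b g + g * u) * P" for g
    by (simp add: Dab_mult assms(1) algebra_simps)
  then have "Dab a b ` ?I \<subseteq> ?I" by auto
  ultimately show ?thesis
    using assms(2) is_ideal_multiples[of P] is_ideal_UNIV_iff[of ?I]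
    unfolding simple_derivation_def by blast
qed

lemma not_simple_derivation_if_solution:
  assumes "pderiv h = a * h + b"
  shows "\<not> simple_derivation (Dab a b)"
proof (rule not_simple_derivation_if_Darboux)
  show "Dab a b [:-h, 1:] = [:a:] * [:-h, 1:]"
    using assms by (simp add: Dab_def dy_def dx_pCons dx_const pderiv_pCons pderiv_minus algebra_simps)
  show "\<not> is_unit [:-h, 1:]"
    by (auto simp: is_unit_poly_iff)
qed simp

lemma simple_derivation_kernel:
  assumes "simple_derivation (Dab a b)" "Dab a b f = 0"
  obtains c where "f = const2 c"
proof (cases "is_unit f")
  case True
  then show ?thesis using that by (auto simp: is_unit_poly_iff const2_def)
next
  case False
  have "f = 0"
    using not_simple_derivation_if_Darboux[of a b f 0] assms False by auto
  then show ?thesis using that[of 0] by (simp add: const2_def)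
qed

section \<open>Linear differential equations over \<open>K[x]\<close>\<close>

lemma pderiv_eq_mult_imp_eq_0:
  fixes g r :: "'a::field_char_0 poly"
  assumes "pderiv g = r * g" "r \<noteq> 0"
  shows "g = 0"
proof (rule ccontr)
  assume "g \<noteq> 0"
  then have "degree (pderiv g) = degree r + degree g"
    using assms by (simp add: degree_mult_eq)
  moreover have "pderiv g \<noteq> 0" using assms \<open>g \<noteq> 0\<close> by simp
  ultimately show False by (simp add: pderiv_eq_0_iff degree_pderiv)
qed

lemma const_coeff_linear_ode_solvable:
  fixes a0 :: "'a::field_char_0"
  assumes "a0 \<noteq> 0"
  shows "\<exists>h. pderiv h = [:a0:] * h + b"
proof (induction "degree b" arbitrary: b rule: less_induct)
  case less
  show ?case
  proof (cases "degree b = 0")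
    case True
    then obtain c where "b = [:c:]" by (metis degree_0_id)
    then show ?thesis using assms by (intro exI[of _ "[:-c/a0:]"]) simp
  next
    case False
    have "degree (smult (1/a0) (pderiv b)) < degree b"
      using False by (simp add: degree_pderiv)
    then obtain h2 where h2: "pderiv h2 = [:a0:] * h2 + smult (1/a0) (pderiv b)"
      using less by blast
    have "pderiv (smult (-1/a0) b + h2) = smult (-1/a0) (pderiv b) + pderiv h2"
      by (simp add: pderiv_add pderiv_diff pderiv_smult)
    also have "\<dots> = [:a0:] * h2 + smult (-1/a0) (pderiv b) + smult (1/a0) (pderiv b)"
      by (simp add: h2)
    also have "\<dots> = [:a0:] * h2" by (simp flip: smult_add_left)
    finally have "pderiv (smult (-1/a0) b + h2) = [:a0:] * (smult (-1/a0) b + h2) + b"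
      using assms by (simp add: algebra_simps)
    then show ?thesis by blast
  qed
qed

lemma pcompose_shift_invariant_imp_const:
  fixes p :: "'a::field_char_0 poly"
  assumes "pcompose p [:c, 1:] = p" "c \<noteq> 0"
  obtains p0 where "p = [:p0:]"
proof -
  have periodic: "poly p (c + x) = poly p x" for x
    using arg_cong[OF assms(1), of "\<lambda>p. poly p x"] by (simp add: poly_pcompose)
  define P where "P = p - [:poly p 0:]"
  have "poly P (of_nat k * c) = 0" for k
  proof (induction k)
    case (Suc k)
    then show ?case using periodic[of "of_nat k * c"] by (simp add: P_def algebra_simps)
  qed (simp add: P_def)
  then have "range (\<lambda>k::nat. of_nat k * c) \<subseteq> {x. poly P x = 0}" by auto
  moreover have "infinite (range (\<lambda>k::nat. of_nat k * c))"
    using assms(2) by (auto intro!: range_inj_infinite injI)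
  ultimately have "P = 0" using poly_roots_finite finite_subset by blast
  then show ?thesis using that unfolding P_def by auto
qed

lemma pderiv_closed_contains_nonzero_const:
  fixes g :: "'a::field_char_0 poly"
  assumes "g \<in> J" "g \<noteq> 0" "\<And>g. g \<in> J \<Longrightarrow> pderiv g \<in> J"
  shows "\<exists>c. c \<noteq> 0 \<and> [:c:] \<in> J"
  using assms(1,2)
proof (induction "degree g" arbitrary: g)
  case 0
  then show ?case by (metis degree_0_id pCons_0_0)
next
  case (Suc n)
  then have "pderiv g \<noteq> 0" "degree (pderiv g) = n"
    by (simp_all add: pderiv_eq_0_iff degree_pderiv)
  then show ?case using Suc assms(3) by blast
qed

section \<open>Simplicity of \<open>D\<close>\<close>

definition leading_coeff_ideal :: "'a::comm_ring_1 poly poly set \<Rightarrow> nat \<Rightarrow> 'a poly set" where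
  "leading_coeff_ideal I n = {coeff f n | f. f \<in> I \<and> degree f \<le> n}"

lemma is_ideal_leading_coeff_ideal:
  assumes "is_ideal I"
  shows "is_ideal (leading_coeff_ideal I n)"
  unfolding is_ideal_def
proof (intro conjI ballI allI)
  show "0 \<in> leading_coeff_ideal I n"
    using assms unfolding is_ideal_def leading_coeff_ideal_def by force
next
  fix g1 g2 assume "g1 \<in> leading_coeff_ideal I n" "g2 \<in> leading_coeff_ideal I n"
  then obtain f1 f2 where "f1 \<in> I" "f2 \<in> I" "degree f1 \<le> n" "degree f2 \<le> n"
    "g1 = coeff f1 n" "g2 = coeff f2 n"
    unfolding leading_coeff_ideal_def by blast
  then show "g1 + g2 \<in> leading_coeff_ideal I n"
    using assms unfolding is_ideal_def leading_coeff_ideal_def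
    by (auto intro!: exI[of _ "f1 + f2"] degree_add_le)
next
  fix g r assume "g \<in> leading_coeff_ideal I n"
  then obtain f where "f \<in> I" "degree f \<le> n" "g = coeff f n"
    unfolding leading_coeff_ideal_def by blast
  then show "r * g \<in> leading_coeff_ideal I n"
    using is_ideal_smult[OF assms] unfolding leading_coeff_ideal_def
    by (auto intro!: exI[of _ "smult r f"] order_trans[OF degree_smult_le])
qed

lemma leading_coeff_ideal_pderiv_closed:
  assumes "is_ideal I" "Dab a b ` I \<subseteq> I" "g \<in> leading_coeff_ideal I n"
  shows "pderiv g \<in> leading_coeff_ideal I n"
proof -
  let ?J = "leading_coeff_ideal I n"
  have J: "is_ideal ?J" using assms(1) by (rule is_ideal_leading_coeff_ideal)
  obtain f where f: "f \<in> I" "degree f \<le> n" "g = coeff f n"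
    using assms(3) unfolding leading_coeff_ideal_def by blast
  have "Dab a b f \<in> I" "degree (Dab a b f) \<le> n"
    using f assms(2) order_trans[OF degree_Dab_le] by blast+
  then have "coeff (Dab a b f) n \<in> ?J" unfolding leading_coeff_ideal_def by blast
  moreover have "smult (of_nat n) a * g \<in> ?J" using J assms(3) unfolding is_ideal_def by blast
  ultimately have "coeff (Dab a b f) n - smult (of_nat n) a * g \<in> ?J" by (rule is_ideal_diff[OF J])
  moreover have "coeff (Dab a b f) n = pderiv g + smult (of_nat n) a * g"
    using f by (simp add: coeff_Dab coeff_eq_0)
  ultimately show ?thesis by simp
qed

lemma solution_if_Darboux_of_degree:
  assumes "Dab a b f = smult (smult (of_nat n) a) f" "degree f \<le> n" "coeff f n = 1" "n \<noteq> 0"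
  shows "\<exists>h. pderiv h = a * h + b"
proof -
  define e where "e = coeff f (n - 1)"
  have "coeff (Dab a b f) (n - 1) = smult (of_nat n) (a * e)"
    using assms(1) by (simp add: e_def)
  then have e: "pderiv e = a * e - smult (of_nat n) b"
    using assms(3,4) by (simp add: coeff_Dab e_def of_nat_diff algebra_simps smult_diff_left)
  have "pderiv (smult (-1 / of_nat n) e) = a * smult (-1 / of_nat n) e + b"
    using assms(4) by (simp add: e pderiv_smult pderiv_minus smult_diff_right)
  then show ?thesis by blast
qed

lemma invariant_ideal_monic_element:
  assumes "is_ideal I" "Dab a b ` I \<subseteq> I" "f0 \<in> I" "f0 \<noteq> 0"
  obtains f where "f \<in> I" "degree f \<le> degree f0" "coeff f (degree f0) = 1"
proof -
  let ?n = "degree f0"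
  have "lead_coeff f0 \<in> leading_coeff_ideal I ?n" "lead_coeff f0 \<noteq> 0"
    using assms(3,4) unfolding leading_coeff_ideal_def by auto
  then obtain c where "c \<noteq> 0" "[:c:] \<in> leading_coeff_ideal I ?n"
    using pderiv_closed_contains_nonzero_const leading_coeff_ideal_pderiv_closed[OF assms(1,2)]
    by metis
  then obtain f where f: "f \<in> I" "degree f \<le> ?n" "coeff f ?n = [:c:]"
    unfolding leading_coeff_ideal_def by auto
  show ?thesis
  proof
    show "smult [:1/c:] f \<in> I" using is_ideal_smult[OF assms(1) f(1)] .
    show "degree (smult [:1/c:] f) \<le> ?n" using f(2) order_trans[OF degree_smult_le] by blast
    show "coeff (smult [:1/c:] f) ?n = 1" using f(3) \<open>c \<noteq> 0\<close> by simp
  qed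
qed

lemma solution_if_not_simple_derivation:
  fixes a b :: "'a::field_char_0 poly"
  assumes "\<not> simple_derivation (Dab a b)"
  shows "\<exists>h. pderiv h = a * h + b"
proof -
  obtain I where I: "is_ideal I" "I \<noteq> {0}" "I \<noteq> UNIV" and D_I: "Dab a b ` I \<subseteq> I"
    using assms unfolding simple_derivation_def by blast
  have "\<exists>f\<in>I. f \<noteq> 0" using I unfolding is_ideal_def by blast
  define n where "n = (LEAST n. \<exists>f\<in>I. f \<noteq> 0 \<and> degree f = n)"
  obtain f0 where "f0 \<in> I" "f0 \<noteq> 0" "degree f0 = n"
    using LeastI_ex[of "\<lambda>n. \<exists>f\<in>I. f \<noteq> 0 \<and> degree f = n"] \<open>\<exists>f\<in>I. f \<noteq> 0\<close>
    unfolding n_def by blast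
  have minimal: "n \<le> degree f" if "f \<in> I" "f \<noteq> 0" for f
    unfolding n_def by (rule Least_le) (use that in blast)
  obtain f where f: "f \<in> I" "degree f \<le> n" "coeff f n = 1"
    using invariant_ideal_monic_element[OF I(1) D_I \<open>f0 \<in> I\<close> \<open>f0 \<noteq> 0\<close>] \<open>degree f0 = n\<close>
    by metis
  have "n \<noteq> 0"
  proof
    assume "n = 0"
    then have "f = 1" using f by (metis degree_0_id le_zero_eq one_pCons)
    then show False using I is_ideal_UNIV_iff f(1) by blast
  qed
  define F where "F = Dab a b f - smult (smult (of_nat n) a) f"
  have "F \<in> I"
    using I(1) D_I f(1) is_ideal_diff is_ideal_smult unfolding F_def by blast
  moreover have "degree F \<le> n"
    using f(2) degree_Dab_le[of a b f] degree_smult_le[of _ f] unfolding F_def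
    by (meson degree_diff_le order_trans)
  moreover have "coeff F n = 0"
    using f by (simp add: F_def coeff_Dab coeff_eq_0)
  ultimately have "F = 0"
    using minimal by (metis le_antisym leading_coeff_0_iff)
  then show ?thesis
    using solution_if_Darboux_of_degree f \<open>n \<noteq> 0\<close> unfolding F_def by simp
qed

theorem simple_derivation_Dab_iff:
  fixes a b :: "'a::field_char_0 poly"
  shows "simple_derivation (Dab a b) \<longleftrightarrow> \<not> (\<exists>h. pderiv h = a * h + b)"
  using not_simple_derivation_if_solution solution_if_not_simple_derivation by blast

section \<open>Automorphisms commuting with \<open>D\<close>\<close>

lemma K_alg_aut_0: "K_alg_aut \<rho> \<Longrightarrow> \<rho> 0 = 0"
  unfolding K_alg_aut_def by (metis add_cancel_right_right add_0)

lemma K_alg_aut_pCons: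
  assumes "K_alg_aut \<rho>"
  shows "\<rho> (pCons g f) = \<rho> [:g:] + \<rho> [:0, 1:] * \<rho> f"
proof -
  have "pCons g f = [:g:] + [:0, 1:] * f" by simp
  then show ?thesis using assms unfolding K_alg_aut_def by metis
qed

lemma K_alg_aut_const:
  assumes "K_alg_aut \<rho>" "\<rho> [:[:0, 1:]:] = [:p:]"
  shows "\<rho> [:g:] = [:pcompose g p:]"
proof (induction g)
  case 0
  then show ?case using K_alg_aut_0[OF assms(1)] by simp
next
  case (pCons u g)
  have "[:pCons u g:] = const2 u + [:[:0, 1:]:] * [:g:]" by (simp add: const2_def)
  then have "\<rho> [:pCons u g:] = const2 u + \<rho> [:[:0, 1:]:] * \<rho> [:g:]"
    using assms(1) unfolding K_alg_aut_def by metis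
  then show ?case using assms(2) pCons(2) by (simp add: const2_def pcompose_pCons)
qed

lemma K_alg_aut_eq_id:
  assumes "K_alg_aut \<rho>" "\<And>g. \<rho> [:g:] = [:g:]" "\<rho> [:0, 1:] = [:0, 1:]"
  shows "\<rho> = id"
proof
  fix f show "\<rho> f = id f"
    by (induction f) (simp_all add: K_alg_aut_0 K_alg_aut_pCons assms)
qed

lemma Dab_eq_affine_imp_linear:
  fixes a a' b b' :: "'a::field_char_0 poly" and q :: "'a poly poly"
  assumes Dq: "Dab a b q = [:b':] + smult a' q"
    and "lead_coeff a' = lead_coeff a" "a \<noteq> 0" "degree q \<noteq> 0"
  obtains k where "a' = a" "k \<noteq> 0" "q = [:coeff q 0, [:k:]:]"
    "pderiv (coeff q 0) + smult k b = b' + a * coeff q 0"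
proof -
  have cq: "pderiv (coeff q n) + smult (of_nat (Suc n)) (b * coeff q (Suc n))
      + smult (of_nat n) (a * coeff q n) = (if n = 0 then b' else 0) + a' * coeff q n" for n
    using arg_cong[OF Dq, of "\<lambda>f. coeff f n"] by (cases n) (simp_all add: coeff_Dab)
  define m where "m = degree q"
  have "pderiv (lead_coeff q) = (a' - smult (of_nat m) a) * lead_coeff q"
    using cq[of m] assms(4) by (simp add: m_def coeff_eq_0 algebra_simps)
  moreover have "lead_coeff q \<noteq> 0" using assms(4) by auto
  ultimately have a': "a' = smult (of_nat m) a"
    using pderiv_eq_mult_imp_eq_0 by fastforce
  then have "lead_coeff a' = of_nat m * lead_coeff a" by (simp only: lead_coeff_smult)
  then have "(of_nat m - 1) * lead_coeff a = 0" using assms(2) by (simp add: algebra_simps)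
  then have "m = 1" using assms(3) by simp
  then have "a' = a" using a' by simp
  have "pderiv (coeff q 1) = 0" using cq[of 1] \<open>m = 1\<close> \<open>a' = a\<close> by (simp add: m_def coeff_eq_0)
  then obtain k where k: "coeff q 1 = [:k:]" using pderiv_iszero by blast
  have "k \<noteq> 0" using k \<open>m = 1\<close> \<open>lead_coeff q \<noteq> 0\<close> by (auto simp: m_def)
  moreover have "q = [:coeff q 0, [:k:]:]"
    using k \<open>m = 1\<close> by (intro poly_eqI) (auto simp: m_def coeff_pCons coeff_eq_0 split: nat.split)
  moreover have "pderiv (coeff q 0) + smult k b = b' + a * coeff q 0"
    using cq[of 0] k \<open>a' = a\<close> by simp
  ultimately show ?thesis using that \<open>a' = a\<close> by blast
qed

lemma not_simple_derivation_if_shift_invariant: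
  fixes a b :: "'a::field_char_0 poly"
  assumes "pcompose a [:c, 1:] = a" "c \<noteq> 0" "a \<noteq> 0"
  shows "\<not> simple_derivation (Dab a b)"
proof -
  obtain a0 where a0: "a = [:a0:]" using pcompose_shift_invariant_imp_const assms(1,2) by blast
  then have "a0 \<noteq> 0" using assms(3) by simp
  then obtain h where "pderiv h = [:a0:] * h + b"
    using const_coeff_linear_ode_solvable by blast
  then show ?thesis using a0 not_simple_derivation_if_solution[of h a b] by simp
qed

lemma Aut_Dab_shifts_x_if_simple:
  assumes "simple_derivation (Dab a b)" "\<rho> \<in> Aut (Dab a b)"
  obtains c where "\<And>g. \<rho> [:g:] = [:pcompose g [:c, 1:]:]"
proof -
  have aut: "K_alg_aut \<rho>" and comm: "\<rho> (Dab a b f) = Dab a b (\<rho> f)" for f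
    using assms(2) unfolding Aut_def by (auto simp: fun_eq_iff)
  define X :: "'a poly poly" where "X = [:[:0, 1:]:]"
  have "\<rho> 1 = 1" using aut unfolding K_alg_aut_def const2_def by (metis one_pCons)
  then have "Dab a b (\<rho> X - X) = 0"
    using comm[of X] by (simp add: X_def Dab_diff Dab_const one_pCons pderiv_pCons)
  then obtain c where "\<rho> X - X = const2 c" using simple_derivation_kernel assms(1) by metis
  then have "\<rho> [:[:0, 1:]:] = [:[:c, 1:]:]" by (simp add: X_def const2_def algebra_simps)
  then show ?thesis using that K_alg_aut_const[OF aut] by blast
qed

lemma K_alg_aut_y_nonconst:
  assumes "K_alg_aut \<rho>" "\<And>g. \<rho> [:g:] = [:pcompose g [:c, 1:]:]"
  shows "degree (\<rho> [:0, 1:]) \<noteq> 0"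
proof
  let ?e = "coeff (\<rho> [:0, 1:]) 0"
  assume "degree (\<rho> [:0, 1:]) = 0"
  then have "\<rho> [:0, 1:] = [:?e:]" by (simp add: degree_0_id)
  also have "\<dots> = \<rho> [:pcompose ?e [:-c, 1:]:]"
    by (simp add: assms(2) pcompose_assoc[symmetric] pcompose_pCons)
  finally have "\<rho> [:0, 1:] = \<rho> [:pcompose ?e [:-c, 1:]:]" .
  moreover have "inj \<rho>" using assms(1) unfolding K_alg_aut_def by (simp add: bij_is_inj)
  ultimately have "[:0, 1:] = [:pcompose ?e [:-c, 1:]:]" by (metis injD)
  then show False by simp
qed

lemma Aut_Dab_trivial_if_simple:
  fixes a b :: "'a::field_char_0 poly"
  assumes simple: "simple_derivation (Dab a b)" and "a \<noteq> 0" and "\<rho> \<in> Aut (Dab a b)"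
  shows "\<rho> = id"
proof -
  have aut: "K_alg_aut \<rho>" and comm: "\<rho> (Dab a b f) = Dab a b (\<rho> f)" for f
    using assms(3) unfolding Aut_def by (auto simp: fun_eq_iff)
  obtain c where \<rho>_const: "\<And>g. \<rho> [:g:] = [:pcompose g [:c, 1:]:]"
    using Aut_Dab_shifts_x_if_simple simple assms(3) by blast
  define q where "q = \<rho> [:0, 1:]"
  have "Dab a b [:0, 1:] = [:b, a:]" by (simp add: Dab_def dy_def dx_pCons dx_const pderiv_pCons)
  then have "Dab a b q = \<rho> [:b, a:]" using comm[of "[:0, 1:]"] by (simp add: q_def)
  also have "\<dots> = [:pcompose b [:c, 1:]:] + smult (pcompose a [:c, 1:]) q"
    using K_alg_aut_pCons[OF aut, of b "[:a:]"] by (simp add: \<rho>_const q_def mult.commute)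
  finally have "Dab a b q = [:pcompose b [:c, 1:]:] + smult (pcompose a [:c, 1:]) q" .
  moreover have "degree q \<noteq> 0" unfolding q_def using K_alg_aut_y_nonconst[OF aut \<rho>_const] .
  moreover have "lead_coeff (pcompose a [:c, 1:]) = lead_coeff a" by (simp add: lead_coeff_comp)
  ultimately obtain k where "pcompose a [:c, 1:] = a" "k \<noteq> 0" and q: "q = [:coeff q 0, [:k:]:]"
    and E: "pderiv (coeff q 0) + smult k b = pcompose b [:c, 1:] + a * coeff q 0"
    using Dab_eq_affine_imp_linear \<open>a \<noteq> 0\<close> by metis
  then have "c = 0"
    using not_simple_derivation_if_shift_invariant \<open>a \<noteq> 0\<close> simple by blast
  have "k = 1"
  proof (rule ccontr)
    assume "k \<noteq> 1"
    have "pderiv (coeff q 0) = a * coeff q 0 + smult (1 - k) b"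
      using E \<open>c = 0\<close> by (simp add: algebra_simps smult_diff_left)
    then have "pderiv (smult (1 / (1 - k)) (coeff q 0))
        = a * smult (1 / (1 - k)) (coeff q 0) + smult (1 / (1 - k) * (1 - k)) b"
      by (simp add: pderiv_smult smult_add_right)
    also have "1 / (1 - k) * (1 - k) = 1" using \<open>k \<noteq> 1\<close> by simp
    finally have "pderiv (smult (1 / (1 - k)) (coeff q 0)) = a * smult (1 / (1 - k)) (coeff q 0) + b"
      by simp
    then show False using not_simple_derivation_if_solution simple by blast
  qed
  then have "coeff q 0 = 0"
    using E \<open>c = 0\<close> pderiv_eq_mult_imp_eq_0[of "coeff q 0" a] \<open>a \<noteq> 0\<close> by simp
  then have "q = [:0, [:1:]:]" using q unfolding \<open>k = 1\<close> by argo
  then have "\<rho> [:0, 1:] = [:0, 1:]" by (simp add: q_def one_pCons)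
  moreover have "\<rho> [:g:] = [:g:]" for g using \<rho>_const \<open>c = 0\<close> by simp
  ultimately show ?thesis using K_alg_aut_eq_id[OF aut] by blast
qed

lemma Aut_Dab_nontrivial_if_solution:
  fixes a b h :: "'a::field_char_0 poly"
  assumes "pderiv h = a * h + b"
  shows "Aut (Dab a b) \<noteq> {id}"
proof -
  define Q :: "'a poly poly" where "Q = [:-h, [:2:]:]"
  define \<rho> where "\<rho> f = pcompose f Q" for f
  have "bij \<rho>"
  proof (rule o_bij)
    define S :: "'a poly poly" where "S = [:smult (1/2) h, [:1/2:]:]"
    have "pcompose S Q = [:0, 1:]" "pcompose Q S = [:0, 1:]"
      by (simp_all add: Q_def S_def pcompose_pCons one_pCons)
    then show "\<rho> \<circ> (\<lambda>f. pcompose f S) = id" "(\<lambda>f. pcompose f S) \<circ> \<rho> = id"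
      by (simp_all add: fun_eq_iff \<rho>_def pcompose_assoc[symmetric])
  qed
  moreover have "\<rho> (Dab a b f) = Dab a b (\<rho> f)" for f
  proof -
    have "dx Q = [:- pderiv h:]" by (simp add: Q_def dx_pCons dx_const pderiv_minus)
    moreover have "b * 2 = smult 2 b" by (metis mult_2_right one_add_one smult_add_left smult_1_left)
    ultimately have DQ: "Dab a b Q = [:b:] + Q * [:a:]"
      using assms by (simp add: Q_def Dab_def dy_def pderiv_pCons algebra_simps)
    have "\<rho> (Dab a b f) = pcompose (dx f) Q + pcompose [:b, a:] Q * pcompose (pderiv f) Q"
      unfolding \<rho>_def Dab_def dy_def pcompose_add pcompose_mult by (rule refl)
    also have "pcompose [:b, a:] Q = [:b:] + Q * [:a:]" by (simp add: pcompose_pCons)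
    finally show ?thesis by (simp add: \<rho>_def Dab_pcompose DQ algebra_simps)
  qed
  ultimately have "\<rho> \<in> Aut (Dab a b)"
    unfolding Aut_def K_alg_aut_def
    by (simp add: \<rho>_def pcompose_add pcompose_mult const2_def fun_eq_iff)
  moreover have "\<rho> [:0, 1:] \<noteq> [:0, 1:]"
    by (simp add: \<rho>_def Q_def pcompose_pCons one_pCons)
  ultimately show ?thesis by auto
qed

theorem theorem1p2:
  fixes a b :: "'a::field_char_0 poly"
  assumes "alg_closed_field TYPE('a)"
    and "a \<noteq> 0"
  shows "simple_derivation (Dab a b) \<longleftrightarrow> Aut (Dab a b) = {id}"
proof
  assume "simple_derivation (Dab a b)"
  moreover have "id \<in> Aut (Dab a b)" unfolding Aut_def K_alg_aut_def by auto
  ultimately show "Aut (Dab a b) = {id}"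
    using Aut_Dab_trivial_if_simple \<open>a \<noteq> 0\<close> by blast
next
  assume "Aut (Dab a b) = {id}"
  then show "simple_derivation (Dab a b)"
    using simple_derivation_Dab_iff Aut_Dab_nontrivial_if_solution by blast
qed

end
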